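(* Let $\epsilon>0$ and $\delta\in(0,1)$, and set $\delta'=\delta+e^{\epsilon}Q(\sqrt{2\epsilon})$; assume $\delta'<1$. For $x\in(0,1)$ let $\mathcal{R}_\epsilon(x)=\sqrt{(Q^{-1}(x))^2+2\epsilon}-Q^{-1}(x)$. Then the function $\mathcal{B}_{\epsilon,\delta}(\mu)=Q\!\left(\tfrac{\epsilon}{\mu}-\tfrac{\mu}{2}\right)-e^{\epsilon}Q\!\left(\tfrac{\epsilon}{\mu}+\tfrac{\mu}{2}\right)-\delta$ satisfies $\mathcal{B}_{\epsilon,\delta}(\mathcal{R}_\epsilon(\delta))\le 0\le \mathcal{B}_{\epsilon,\delta}(\mathcal{R}_\epsilon(\delta'))$; consequently, any $\mu_0>0$ with $\mathcal{B}_{\epsilon,\delta}(\mu_0)=0$ lies in the interval $[\mathcal{R}_\epsilon(\delta),\mathcal{R}_\epsilon(\delta')]$, and such a $\mu_0$ exists in this interval.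
   Context: $Q(\cdot)$ denotes the survival function of the standard normal distribution, $Q(x)=\mathbb{P}\{Z>x\}$, $Z\sim\mathcal{N}(0,1)$, and $Q^{-1}$ its inverse on $(0,1)$. *)

theory Defs
  imports "HOL-Probability.Probability"
begin

definition Qf :: "real \<Rightarrow> real" where
  "Qf x = measure (density lborel std_normal_density) {x<..}"

text \<open>Inverse of Q on (0,1).\<close>
definition Qinv :: "real \<Rightarrow> real" where
  "Qinv y = (THE x. Qf x = y)"

definition Rfun :: "real \<Rightarrow> real \<Rightarrow> real" where
  "Rfun \<epsilon> x = sqrt ((Qinv x)\<^sup>2 + 2 * \<epsilon>) - Qinv x"

definition Bfun :: "real \<Rightarrow> real \<Rightarrow> real \<Rightarrow> real" where
  "Bfun \<epsilon> \<delta> \<mu> = Qf (\<epsilon> / \<mu> - \<mu> / 2) - exp \<epsilon> * Qf (\<epsilon> / \<mu> + \<mu> / 2) - \<delta>"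

end

theory Submission
  imports Defs
begin

text \<open>
  The derivative of \<open>Q\<close> is \<open>-\<phi>\<close>, and \<open>e\<^sup>\<epsilon> \<phi>(\<epsilon>/\<mu> + \<mu>/2) = \<phi>(\<epsilon>/\<mu> - \<mu>/2)\<close>; hence
  \<open>B\<^sub>\<epsilon>\<^sub>,\<^sub>\<delta>'(\<mu>) = \<phi>(\<epsilon>/\<mu> - \<mu>/2) > 0\<close> and \<open>B\<^sub>\<epsilon>\<^sub>,\<^sub>\<delta>\<close> is strictly increasing and continuous on
  \<open>(0,\<infinity>)\<close>. The substitution \<open>\<mu> = \<R>\<^sub>\<epsilon>(x)\<close> is exactly the one making \<open>\<epsilon>/\<mu> - \<mu>/2 = Q\<^sup>-\<^sup>1(x)\<close>
  and \<open>\<epsilon>/\<mu> + \<mu>/2 = \<surd>(Q\<^sup>-\<^sup>1(x)\<^sup>2 + 2\<epsilon>)\<close>, so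
  \<open>B\<^sub>\<epsilon>\<^sub>,\<^sub>\<delta>(\<R>\<^sub>\<epsilon>(x)) = x - \<delta> - e\<^sup>\<epsilon> Q(\<surd>(Q\<^sup>-\<^sup>1(x)\<^sup>2 + 2\<epsilon>))\<close>, which lies between
  \<open>x - \<delta> - e\<^sup>\<epsilon> Q(\<surd>(2\<epsilon>))\<close> and \<open>x - \<delta>\<close>. Taking \<open>x = \<delta>\<close> and \<open>x = \<delta>'\<close> gives the two signs,
  and monotonicity together with the intermediate value theorem locates the zero.
\<close>

lemma zero_of_strict_mono_on_between:
  fixes f :: "real \<Rightarrow> real"
  assumes "strict_mono_on S f" "a \<in> S" "b \<in> S" "f a \<le> 0" "0 \<le> f b"
    and "x \<in> S" "f x = 0"
  shows "a \<le> x \<and> x \<le> b"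
proof -
  have "f a \<le> f x" "f x \<le> f b"
    using assms(4,5,7) by simp_all
  with assms(1-3,6) show ?thesis
    by (simp add: strict_mono_on_less_eq)
qed

lemma zero_of_strict_mono_on_exists:
  fixes f :: "real \<Rightarrow> real"
  assumes "strict_mono_on S f" "continuous_on S f" "is_interval S"
    and "a \<in> S" "b \<in> S" "f a \<le> 0" "0 \<le> f b"
  shows "\<exists>x. a \<le> x \<and> x \<le> b \<and> f x = 0"
proof -
  have "f a \<le> f b"
    using assms(6,7) by simp
  with assms(1,4,5) have "a \<le> b"
    by (simp add: strict_mono_on_less_eq)
  moreover have "{a..b} \<subseteq> S"
    using assms(3-5) unfolding is_interval_1 by (meson atLeastAtMost_iff subsetI)
  then have "continuous_on {a..b} f"
    by (rule continuous_on_subset[OF assms(2)])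
  ultimately show ?thesis
    using IVT'[of f a 0 b] assms(6,7) by auto
qed

lemma measure_density_Ioc_eq_integral:
  fixes f :: "real \<Rightarrow> real"
  assumes "a \<le> b" "continuous_on {a..b} f" "f \<in> borel_measurable borel" "\<And>x. 0 \<le> f x"
  shows "measure (density lborel f) {a<..b} = integral {a..b} f"
proof -
  have int: "(f has_integral integral {a..b} f) {a..b}"
    using integrable_continuous_real[OF assms(2)] by (simp add: has_integral_integral)
  have "negligible {x \<in> {a<..b} - {a..b}. f x \<noteq> 0}" "negligible {x \<in> {a..b} - {a<..b}. f x \<noteq> 0}"
    by (auto intro: negligible_subset[of "{a}"])
  then have "(f has_integral integral {a..b} f) {a<..b}"
    using has_integral_spike_set_eq int by blast
  then have "(\<integral>\<^sup>+x. ennreal (f x) * indicator {a<..b} x \<partial>lborel) = ennreal (integral {a..b} f)"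
    using assms(4) by (intro nn_integral_has_integral_lebesgue') auto
  then have "emeasure (density lborel f) {a<..b} = ennreal (integral {a..b} f)"
    using assms(3) by (subst emeasure_density) auto
  moreover have "0 \<le> integral {a..b} f"
    using integral_nonneg[OF integrable_continuous_real[OF assms(2)]] assms(4) by simp
  ultimately show ?thesis
    unfolding measure_def by simp
qed

lemma Qf_nonneg: "0 \<le> Qf x"
  unfolding Qf_def by simp

lemma Qf_eq_1_minus_cdf: "Qf x = 1 - cdf std_normal_distribution x"
proof -
  interpret real_distribution std_normal_distribution
    by (rule real_dist_normal_dist)
  have "{x<..} = space std_normal_distribution - {..x}" by auto
  then show ?thesis
    using prob_compl[of "{..x}"] unfolding Qf_def cdf_def by simp
qed

lemma Qf_eq_minus_integral:
  assumes "a \<le> b"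
  shows "Qf b = Qf a - integral {a..b} std_normal_density"
proof -
  interpret prob_space std_normal_distribution
    by (rule prob_space_normal_density) simp
  have "{a<..} = {a<..b} \<union> {b<..}" using assms by auto
  then have "Qf a = measure std_normal_distribution ({a<..b} \<union> {b<..})"
    unfolding Qf_def by simp
  also have "\<dots> = measure std_normal_distribution {a<..b} + Qf b"
    unfolding Qf_def by (rule finite_measure_Union) auto
  finally have "Qf a = measure std_normal_distribution {a<..b} + Qf b" .
  moreover have "continuous_on {a..b} std_normal_density"
    unfolding std_normal_density_def by (intro continuous_intros) auto
  then have "measure std_normal_distribution {a<..b} = integral {a..b} std_normal_density"
    by (rule measure_density_Ioc_eq_integral[OF assms]) simp_all
  ultimately show ?thesis
    by linarith
qed

lemma Qf_has_real_derivative: "(Qf has_real_derivative - std_normal_density x) (at x)"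
proof -
  have "continuous_on {x-1..x+1} std_normal_density"
    unfolding std_normal_density_def by (intro continuous_intros) auto
  then have "((\<lambda>u. integral {x-1..u} std_normal_density) has_real_derivative std_normal_density x)
      (at x within {x-1..x+1})"
    by (rule integral_has_real_derivative) auto
  then have "((\<lambda>u. Qf (x-1) - integral {x-1..u} std_normal_density)
      has_real_derivative - std_normal_density x) (at x)"
    by (auto simp: at_within_Icc_at intro!: derivative_eq_intros)
  then show ?thesis
    by (rule has_field_derivative_transform_within_open[where S = "{x-1<..<x+1}"])
       (auto simp: Qf_eq_minus_integral[symmetric])
qed

lemma isCont_Qf: "isCont Qf x"
  using Qf_has_real_derivative DERIV_isCont by blast

lemma Qf_strict_antimono: "a < b \<Longrightarrow> Qf b < Qf a"
  using DERIV_neg_imp_decreasing[of a b Qf] Qf_has_real_derivative normal_density_pos[of 1 0]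
  by (metis neg_less_0_iff_less zero_less_one)

lemma Qf_antimono: "a \<le> b \<Longrightarrow> Qf b \<le> Qf a"
  using Qf_strict_antimono[of a b] by (cases "a = b") auto

lemma tendsto_Qf_at_top: "(Qf \<longlongrightarrow> 0) at_top"
  using tendsto_diff[OF tendsto_const real_distribution.cdf_lim_at_top_prob[OF real_dist_normal_dist],
      of 1]
  by (simp add: Qf_eq_1_minus_cdf[abs_def])

lemma tendsto_Qf_at_bot: "(Qf \<longlongrightarrow> 1) at_bot"
  using tendsto_diff[OF tendsto_const finite_borel_measure.cdf_lim_at_bot[OF
        real_distribution.finite_borel_measure_M[OF real_dist_normal_dist]], of 1]
  by (simp add: Qf_eq_1_minus_cdf[abs_def])

lemma Qf_Qinv:
  assumes "0 < y" "y < 1"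
  shows "Qf (Qinv y) = y"
proof -
  obtain b where b: "Qf b < y"
    using order_tendstoD(2)[OF tendsto_Qf_at_top assms(1)] by (auto simp: eventually_at_top_linorder)
  obtain a where a: "y < Qf a"
    using order_tendstoD(1)[OF tendsto_Qf_at_bot assms(2)] by (auto simp: eventually_at_bot_linorder)
  have "a \<le> b"
    using a b Qf_antimono[of b a] by linarith
  then obtain x where x: "Qf x = y"
    using IVT2[of Qf b y a] a b isCont_Qf by force
  have "Qf z = y \<longleftrightarrow> z = x" for z
    using Qf_strict_antimono[of z x] Qf_strict_antimono[of x z] x by (cases z x rule: linorder_cases) auto
  then have "Qinv y = x"
    unfolding Qinv_def by simp
  with x show ?thesis by simp
qed

lemma std_normal_density_exp_shift:
  fixes e m :: real
  assumes "m \<noteq> 0"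
  shows "exp e * std_normal_density (e/m + m/2) = std_normal_density (e/m - m/2)"
proof -
  have "e - (e/m + m/2)\<^sup>2 / 2 = - (e/m - m/2)\<^sup>2 / 2"
    using assms by (simp add: power2_eq_square field_simps)
  then have "exp e * exp (- (e/m + m/2)\<^sup>2 / 2) = exp (- (e/m - m/2)\<^sup>2 / 2)"
    by (simp flip: exp_add)
  then show ?thesis
    unfolding std_normal_density_def by (simp add: mult.left_commute)
qed

lemma Bfun_has_real_derivative:
  fixes e d m :: real
  assumes "m > 0"
  shows "(Bfun e d has_real_derivative std_normal_density (e/m - m/2)) (at m)"
proof -
  have "(Bfun e d has_real_derivative
      - std_normal_density (e/m - m/2) * (- e / m\<^sup>2 - 1/2)
      - exp e * (- std_normal_density (e/m + m/2) * (- e / m\<^sup>2 + 1/2))) (at m)"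
    unfolding Bfun_def[abs_def] using assms
    by (auto intro!: derivative_eq_intros DERIV_chain2[OF Qf_has_real_derivative]
        simp: field_simps power2_eq_square)
  then show ?thesis
    using std_normal_density_exp_shift[of m e] assms by (simp add: algebra_simps)
qed

lemma strict_mono_on_Bfun: "strict_mono_on {0<..} (Bfun e d)"
proof (rule strict_mono_onI)
  fix r s :: real
  assume "r \<in> {0<..}" "s \<in> {0<..}" "r < s"
  have "\<exists>y. (Bfun e d has_real_derivative y) (at x) \<and> 0 < y" if "r \<le> x" for x
  proof (intro exI conjI)
    show "(Bfun e d has_real_derivative std_normal_density (e/x - x/2)) (at x)"
      using that \<open>r \<in> {0<..}\<close> by (intro Bfun_has_real_derivative) simp
  qed (rule normal_density_pos, simp)
  then show "Bfun e d r < Bfun e d s"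
    using DERIV_pos_imp_increasing[OF \<open>r < s\<close>] by blast
qed

lemma continuous_on_Bfun: "continuous_on {0<..} (Bfun e d)"
  by (intro continuous_at_imp_continuous_on ballI DERIV_isCont[OF Bfun_has_real_derivative]) simp

lemma sqrt_shift_identities:
  fixes e q :: real
  assumes "e > 0"
  defines "m \<equiv> sqrt (q\<^sup>2 + 2*e) - q"
  shows "m > 0" "e/m - m/2 = q" "e/m + m/2 = sqrt (q\<^sup>2 + 2*e)"
proof -
  define s where "s = sqrt (q\<^sup>2 + 2*e)"
  have s2: "s\<^sup>2 = q\<^sup>2 + 2*e"
    unfolding s_def using assms by simp
  have "\<bar>q\<bar> < s"
    unfolding s_def using assms by (metis real_sqrt_abs real_sqrt_less_mono less_add_same_cancel1
        mult_pos_pos zero_less_numeral)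
  then show "m > 0"
    unfolding m_def s_def[symmetric] by simp
  have m: "m = s - q"
    unfolding m_def s_def ..
  have em: "e/m = (s + q)/2"
    using \<open>m > 0\<close> s2 unfolding m by (simp add: field_simps power2_eq_square)
  show "e/m - m/2 = q" "e/m + m/2 = sqrt (q\<^sup>2 + 2*e)"
    unfolding em s_def[symmetric] by (simp_all add: m field_simps)
qed

lemma Rfun_pos: "e > 0 \<Longrightarrow> Rfun e x > 0"
  unfolding Rfun_def by (rule sqrt_shift_identities)

lemma Bfun_Rfun:
  assumes "e > 0" "0 < x" "x < 1"
  shows "Bfun e d (Rfun e x) = x - d - exp e * Qf (sqrt ((Qinv x)\<^sup>2 + 2*e))"
  using sqrt_shift_identities[OF assms(1), of "Qinv x"] Qf_Qinv[OF assms(2,3)]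
  unfolding Rfun_def Bfun_def by simp

lemma Bfun_Rfun_bounds:
  assumes "e > 0" "0 < x" "x < 1"
  shows "x - d - exp e * Qf (sqrt (2*e)) \<le> Bfun e d (Rfun e x)" "Bfun e d (Rfun e x) \<le> x - d"
  using Bfun_Rfun[OF assms] Qf_nonneg Qf_antimono[of "sqrt (2*e)" "sqrt ((Qinv x)\<^sup>2 + 2*e)"]
  by auto

theorem mainTheorem3:
  fixes \<epsilon> \<delta> \<delta>' :: real
  assumes "\<epsilon> > 0" and "0 < \<delta>" and "\<delta> < 1"
    and "\<delta>' = \<delta> + exp \<epsilon> * Qf (sqrt (2 * \<epsilon>))"
    and "\<delta>' < 1"
  shows "Bfun \<epsilon> \<delta> (Rfun \<epsilon> \<delta>) \<le> 0 \<and> 0 \<le> Bfun \<epsilon> \<delta> (Rfun \<epsilon> \<delta>')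
    \<and> (\<forall>\<mu>0 > 0. Bfun \<epsilon> \<delta> \<mu>0 = 0 \<longrightarrow> Rfun \<epsilon> \<delta> \<le> \<mu>0 \<and> \<mu>0 \<le> Rfun \<epsilon> \<delta>')
    \<and> (\<exists>\<mu>0 > 0. Rfun \<epsilon> \<delta> \<le> \<mu>0 \<and> \<mu>0 \<le> Rfun \<epsilon> \<delta>' \<and> Bfun \<epsilon> \<delta> \<mu>0 = 0)"
proof -
  have "0 < \<delta>'"
    using assms(2,4) mult_nonneg_nonneg[OF exp_ge_zero Qf_nonneg, of \<epsilon> "sqrt (2 * \<epsilon>)"]
    by linarith
  have lower: "Bfun \<epsilon> \<delta> (Rfun \<epsilon> \<delta>) \<le> 0"
    using Bfun_Rfun_bounds(2)[OF assms(1-3), of \<delta>] by simp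
  have upper: "0 \<le> Bfun \<epsilon> \<delta> (Rfun \<epsilon> \<delta>')"
    using Bfun_Rfun_bounds(1)[OF assms(1) \<open>0 < \<delta>'\<close> assms(5), of \<delta>] assms(4) by simp
  have in_domain: "Rfun \<epsilon> \<delta> \<in> {0<..}" "Rfun \<epsilon> \<delta>' \<in> {0<..}"
    using Rfun_pos[OF assms(1)] by auto
  obtain \<mu> where \<mu>: "Rfun \<epsilon> \<delta> \<le> \<mu>" "\<mu> \<le> Rfun \<epsilon> \<delta>'" "Bfun \<epsilon> \<delta> \<mu> = 0"
    using zero_of_strict_mono_on_exists[OF strict_mono_on_Bfun continuous_on_Bfun _ in_domain lower upper]
    by auto
  then have "\<mu> > 0"
    using in_domain(1) by simp
  with \<mu> show ?thesis
    using lower upper zero_of_strict_mono_on_between[OF strict_mono_on_Bfun in_domain lower upper]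
    by auto
qed

end
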